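(* Let $A>0$, let $c_0\in\mathrm{Imm}(S^1,\mathbb R^2)$ have constant speed $|c_{0,\theta}|\equiv\ell/2\pi$ where $\ell=\ell(c_0)$, and let $0<\varepsilon<\min\{2\sqrt{A\ell},\ell^{3/2}\}/8$. Let $c:[0,1]\times S^1\to\mathbb R^2$ be a smooth path in $\mathrm{Imm}(S^1,\mathbb R^2)$ with $c(0,\cdot)=c_0$ which is horizontal ($\langle c_t,c_\theta\rangle\equiv0$) and satisfies $\int_{S^1}(1+A\kappa_{c(t)}^2)|c_t|^2|c_\theta|\,d\theta=\varepsilon^2$ for all $t\in[0,1]$. Then with $\eta=4(\ell^{3/4}A^{-1/4}+\ell^{1/4})\sqrt\varepsilon$, $$\max_{\theta\in S^1}|c(0,\theta)-c(1,\theta)|\le\eta.$$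
   Context: $S^1=\mathbb R/2\pi\mathbb Z$, $\mathbb R^2\cong\mathbb C$. $\mathrm{Imm}(S^1,\mathbb R^2)$ is the space of smooth immersions; a smooth path in it is a jointly smooth map $c(t,\theta)$ with each $c(t,\cdot)$ an immersion. $\ell(c)=\int_{S^1}|c_\theta|\,d\theta$, $\kappa_c=\det(c_\theta,c_{\theta\theta})/|c_\theta|^3$. *)

theory Defs
  imports "HOL-Analysis.Analysis"
begin

text \<open>A path of closed curves is a function c :: real => real => complex, c t theta,
  with t in [0,1] and theta in R, 2 pi-periodic in theta (S^1 = R / 2 pi Z).\<close>

definition dt :: "(real \<Rightarrow> real \<Rightarrow> complex) \<Rightarrow> real \<Rightarrow> real \<Rightarrow> complex" where
  "dt f t \<theta> = vector_derivative (\<lambda>s. f s \<theta>) (at t within {0..1})"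

definition dth :: "(real \<Rightarrow> real \<Rightarrow> complex) \<Rightarrow> real \<Rightarrow> real \<Rightarrow> complex" where
  "dth f t \<theta> = vector_derivative (\<lambda>x. f t x) (at \<theta>)"

fun iter_partial :: "bool list \<Rightarrow> (real \<Rightarrow> real \<Rightarrow> complex) \<Rightarrow> real \<Rightarrow> real \<Rightarrow> complex" where
  "iter_partial [] f = f"
| "iter_partial (True # w) f = dt (iter_partial w f)"
| "iter_partial (False # w) f = dth (iter_partial w f)"

definition jointly_smooth :: "(real \<Rightarrow> real \<Rightarrow> complex) \<Rightarrow> bool" where
  "jointly_smooth c \<longleftrightarrow> (\<forall>w.
     continuous_on ({0..1} \<times> UNIV) (\<lambda>(t,\<theta>). iter_partial w c t \<theta>) \<and>
     (\<forall>t\<in>{0..1}. \<forall>\<theta>.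
        ((\<lambda>s. iter_partial w c s \<theta>) has_vector_derivative dt (iter_partial w c) t \<theta>) (at t within {0..1}) \<and>
        ((\<lambda>x. iter_partial w c t x) has_vector_derivative dth (iter_partial w c) t \<theta>) (at \<theta>)))"

definition smooth_imm_path :: "(real \<Rightarrow> real \<Rightarrow> complex) \<Rightarrow> bool" where
  "smooth_imm_path c \<longleftrightarrow> jointly_smooth c \<and>
     (\<forall>t\<in>{0..1}. \<forall>\<theta>. c t (\<theta> + 2*pi) = c t \<theta>) \<and>
     (\<forall>t\<in>{0..1}. \<forall>\<theta>. dth c t \<theta> \<noteq> 0)"

definition det2 :: "complex \<Rightarrow> complex \<Rightarrow> real" where
  "det2 a b = Re a * Im b - Im a * Re b"

definition curve_length :: "(real \<Rightarrow> complex) \<Rightarrow> real" where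
  "curve_length \<gamma> = integral {0..2*pi} (\<lambda>\<theta>. norm (vector_derivative \<gamma> (at \<theta>)))"

definition curvature :: "(real \<Rightarrow> complex) \<Rightarrow> real \<Rightarrow> real" where
  "curvature \<gamma> \<theta> = det2 (vector_derivative \<gamma> (at \<theta>))
       (vector_derivative (\<lambda>x. vector_derivative \<gamma> (at x)) (at \<theta>))
     / norm (vector_derivative \<gamma> (at \<theta>)) ^ 3"

end

theory Submission
  imports Defs "HOL-Library.Periodic_Fun"
begin

text \<open>Cut out a window \<open>[p, q]\<close> of parameters around \<open>\<theta>\<close> and follow the arc-length centroid
  \<open>m(t)\<close> of the arc \<open>c(t)|[p,q]\<close>, whose length is \<open>L(t)\<close>. Every point of the arc lies within
  \<open>L(t)\<close> of \<open>m(t)\<close>, so \<open>|c(0,\<theta>) - c(1,\<theta>)| \<le> L(0) + |m(1) - m(0)| + L(1)\<close>. Horizontality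
  gives \<open>|\<partial>\<^sub>t |c\<^sub>\<theta>|| = |\<kappa>| |c\<^sub>t| |c\<^sub>\<theta>|\<close>, so Cauchy--Schwarz against the energy shows that
  \<open>\<surd>L\<close> moves by at most \<open>\<epsilon> / (2 \<surd>A)\<close> and that \<open>|m'| \<le> \<epsilon> \<surd>L / \<surd>A + \<epsilon> / \<surd>L\<close>.
  For a constant-speed \<open>c(0)\<close> the window can be chosen with
  \<open>\<surd>L(0) = l\<^bsup>1/8\<^esup> \<epsilon>\<^bsup>1/4\<^esup> / 2 + \<epsilon> / \<surd>A\<close>, and then the three terms add up to at most \<open>\<eta>\<close>.\<close>

lemma has_vector_derivative_norm:
  fixes g :: "real \<Rightarrow> 'a::real_inner"
  assumes "(g has_vector_derivative g') (at t within S)" "g t \<noteq> 0"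
  shows "((\<lambda>s. norm (g s)) has_vector_derivative (g t \<bullet> g') / norm (g t)) (at t within S)"
proof -
  have "((\<lambda>s. norm (g s)) has_derivative (\<lambda>h. (h *\<^sub>R g') \<bullet> sgn (g t))) (at t within S)"
    using has_derivative_compose[OF assms(1)[unfolded has_vector_derivative_def]
        has_derivative_norm[OF assms(2)]] .
  moreover have "(\<lambda>h. (h *\<^sub>R g') \<bullet> sgn (g t)) = (\<lambda>h. h *\<^sub>R ((g t \<bullet> g') / norm (g t)))"
    by (intro ext) (simp add: sgn_div_norm inner_commute divide_inverse_commute)
  ultimately show ?thesis unfolding has_vector_derivative_def by simp
qed

lemma has_vector_derivative_inner:
  fixes f g :: "real \<Rightarrow> 'a::real_inner"
  assumes "(f has_vector_derivative f') (at t within S)" "(g has_vector_derivative g') (at t within S)"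
  shows "((\<lambda>s. f s \<bullet> g s) has_vector_derivative f t \<bullet> g' + f' \<bullet> g t) (at t within S)"
proof -
  have "((\<lambda>s. f s \<bullet> g s) has_derivative (\<lambda>h. f t \<bullet> (h *\<^sub>R g') + (h *\<^sub>R f') \<bullet> g t)) (at t within S)"
    using has_derivative_inner[OF assms[unfolded has_vector_derivative_def]] by simp
  moreover have "(\<lambda>h. f t \<bullet> (h *\<^sub>R g') + (h *\<^sub>R f') \<bullet> g t) = (\<lambda>h. h *\<^sub>R (f t \<bullet> g' + f' \<bullet> g t))"
    by (intro ext) (simp add: distrib_left)
  ultimately show ?thesis unfolding has_vector_derivative_def by simp
qed

lemma norm_diff_le_of_vector_derivative_bound:
  fixes f :: "real \<Rightarrow> 'a::real_normed_vector"
  assumes "\<And>x. x \<in> {a..b} \<Longrightarrow> (f has_vector_derivative f' x) (at x within {a..b})"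
    and "\<And>x. x \<in> {a..b} \<Longrightarrow> norm (f' x) \<le> B"
    and "x \<in> {a..b}" "y \<in> {a..b}"
  shows "norm (f x - f y) \<le> B * \<bar>x - y\<bar>"
proof -
  have "norm (f x - f y) \<le> B * norm (x - y)"
  proof (rule differentiable_bound[where f'="\<lambda>x h. h *\<^sub>R f' x"])
    show "(f has_derivative (\<lambda>h. h *\<^sub>R f' x)) (at x within {a..b})" if "x \<in> {a..b}" for x
      using assms(1)[OF that] by (simp add: has_vector_derivative_def)
    show "onorm (\<lambda>h. h *\<^sub>R f' x) \<le> B" if "x \<in> {a..b}" for x
      using assms(2)[OF that] onorm_scaleR_left[OF bounded_linear_ident, of "f' x"]
      by (simp add: onorm_id)
  qed (use assms in auto)
  then show ?thesis by simp
qed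

text \<open>If \<open>V \<perp> T\<close>, then \<open>V\<close> is a multiple of the normal \<open>i T / |T|\<close>, and pairing it with
  \<open>W\<close> picks up the normal component \<open>det2 T W / |T|\<close> of \<open>W\<close>.\<close>
lemma abs_inner_orthogonal_eq_det2:
  fixes V T W :: complex
  assumes "V \<bullet> T = 0" "T \<noteq> 0"
  shows "\<bar>V \<bullet> W\<bar> = norm V * \<bar>det2 T W\<bar> / norm T"
proof -
  have "(V \<bullet> W) * (T \<bullet> T) = (V \<bullet> T) * (W \<bullet> T) + det2 T V * det2 T W"
    and "(V \<bullet> V) * (T \<bullet> T) = (V \<bullet> T)\<^sup>2 + (det2 T V)\<^sup>2"
    by (simp_all add: inner_complex_def det2_def power2_eq_square algebra_simps)
  then have VW: "(V \<bullet> W) * (norm T)\<^sup>2 = det2 T V * det2 T W"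
    and "(det2 T V)\<^sup>2 = (norm V * norm T)\<^sup>2"
    using assms(1) by (simp_all add: power2_norm_eq_inner power_mult_distrib)
  then have "\<bar>det2 T V\<bar> = norm V * norm T"
    by (metis abs_of_nonneg norm_ge_zero real_sqrt_abs zero_le_mult_iff)
  then have "\<bar>V \<bullet> W\<bar> * (norm T)\<^sup>2 = norm V * norm T * \<bar>det2 T W\<bar>"
    using arg_cong[OF VW, of abs] by (simp add: abs_mult)
  then show ?thesis
    using assms(2) by (simp add: power2_eq_square field_simps)
qed

lemma integral_le_sqrt_of_square_le_mult:
  fixes h f g :: "real \<Rightarrow> real"
  assumes "h integrable_on S" "f integrable_on S" "g integrable_on S"
    and "\<And>x. x \<in> S \<Longrightarrow> (h x)\<^sup>2 \<le> f x * g x"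
    and "\<And>x. x \<in> S \<Longrightarrow> 0 \<le> f x" "\<And>x. x \<in> S \<Longrightarrow> 0 \<le> g x"
    and "integral S f \<le> F" "F > 0" "integral S g = G" "G > 0"
  shows "integral S h \<le> sqrt (F * G)"
proof -
  define l where "l = sqrt (G / F)"
  have l: "l > 0" using assms by (simp add: l_def)
  have amgm: "h x \<le> (l * f x + g x / l) / 2" if "x \<in> S" for x
  proof -
    have "((l * f x + g x / l) / 2)\<^sup>2 - f x * g x = ((l * f x - g x / l) / 2)\<^sup>2"
      using l by (simp add: power2_eq_square field_simps)
    then have "(h x)\<^sup>2 \<le> ((l * f x + g x / l) / 2)\<^sup>2"
      using assms(4)[OF that] zero_le_power2[of "(l * f x - g x / l) / 2"] by linarith
    moreover have "0 \<le> (l * f x + g x / l) / 2" using assms(5,6)[OF that] l by simp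
    ultimately show ?thesis using abs_le_square_iff by force
  qed
  have int_f: "(\<lambda>x. l * f x) integrable_on S" and int_g: "(\<lambda>x. g x / l) integrable_on S"
    using assms(2,3) by (auto intro: integrable_on_divide integrable_on_mult_right)
  have "integral S h \<le> integral S (\<lambda>x. (l * f x + g x / l) / 2)"
    by (rule integral_le[OF assms(1) _ amgm]) (intro integrable_on_divide integrable_add int_f int_g)
  also have "\<dots> = (l * integral S f + G / l) / 2"
    using assms(9) by (simp add: integral_divide integral_add[OF int_f int_g] integral_mult_right)
  also have "\<dots> \<le> (l * F + G / l) / 2" using assms(7) l by simp
  also have "\<dots> = sqrt (F * G)"
    using assms(8,10) by (simp add: l_def real_sqrt_divide real_sqrt_mult field_simps)
  finally show ?thesis .
qed

lemma integral_scaleR_const: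
  "f integrable_on S \<Longrightarrow> integral S (\<lambda>x. f x *\<^sub>R v) = integral S f *\<^sub>R v"
  by (rule integral_unique[OF has_integral_scaleR_left[OF integrable_integral]])

lemma continuous_on_fix_fst:
  fixes f :: "'a::topological_space \<Rightarrow> 'b::topological_space \<Rightarrow> 'c::topological_space"
  assumes "continuous_on (T \<times> UNIV) (\<lambda>z. f (fst z) (snd z))" "t \<in> T"
  shows "continuous_on S (f t)"
  by (rule continuous_on_compose2[OF assms(1), of _ "\<lambda>x. (t, x)", simplified])
     (use assms(2) in \<open>auto intro!: continuous_intros\<close>)

lemma continuous_on_fix_snd:
  fixes f :: "'a::topological_space \<Rightarrow> 'b::topological_space \<Rightarrow> 'c::topological_space"
  assumes "continuous_on (T \<times> UNIV) (\<lambda>z. f (fst z) (snd z))" "S \<subseteq> T"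
  shows "continuous_on S (\<lambda>s. f s x)"
  by (rule continuous_on_compose2[OF assms(1), of _ "\<lambda>s. (s, x)", simplified])
     (use assms(2) in \<open>auto intro!: continuous_intros\<close>)

lemma continuous_on_swap_restrict:
  fixes f :: "'a::topological_space \<Rightarrow> 'b::topological_space \<Rightarrow> 'c::topological_space"
  assumes "continuous_on (T \<times> UNIV) (\<lambda>z. f (fst z) (snd z))" "U \<subseteq> T"
  shows "continuous_on (UNIV \<times> U) (\<lambda>(x, s). f s x)"
  unfolding case_prod_beta'
  by (rule continuous_on_compose2[OF assms(1), of _ "\<lambda>z. (snd z, fst z)", simplified])
     (use assms(2) in \<open>auto intro!: continuous_intros\<close>)

lemma interval_of_length_containing:
  fixes a b x d :: real
  assumes "a \<le> x" "x \<le> b" "0 < d" "2 * d \<le> b - a"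
  obtains p q where "a \<le> p" "p < q" "q \<le> b" "x \<in> {p..q}" "q - p = d"
proof (cases "x + d \<le> b")
  case True
  then show ?thesis using that[of x "x + d"] assms by auto
next
  case False
  then show ?thesis using that[of "x - d" x] assms by auto
qed

lemma periodic_reduce_frac:
  fixes f :: "real \<Rightarrow> 'a"
  assumes "\<And>x. f (x + T) = f x" "T \<noteq> 0"
  shows "f x = f (T * frac (x / T))"
proof -
  interpret periodic_fun_simple f T by standard (rule assms(1))
  have "T * frac (x / T) = x - of_int \<lfloor>x / T\<rfloor> * T"
    using assms(2) by (simp add: frac_def algebra_simps)
  then show ?thesis by (simp add: minus_of_int)
qed

definition speed_dt :: "(real \<Rightarrow> real \<Rightarrow> complex) \<Rightarrow> real \<Rightarrow> real \<Rightarrow> real" where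
  "speed_dt c t \<theta> = (dth c t \<theta> \<bullet> dth (dt c) t \<theta>) / norm (dth c t \<theta>)"

definition arc_length :: "(real \<Rightarrow> real \<Rightarrow> complex) \<Rightarrow> real \<Rightarrow> real \<Rightarrow> real \<Rightarrow> real" where
  "arc_length c p q t = integral {p..q} (\<lambda>\<theta>. norm (dth c t \<theta>))"

definition arc_moment :: "(real \<Rightarrow> real \<Rightarrow> complex) \<Rightarrow> real \<Rightarrow> real \<Rightarrow> real \<Rightarrow> complex" where
  "arc_moment c p q t = integral {p..q} (\<lambda>\<theta>. norm (dth c t \<theta>) *\<^sub>R c t \<theta>)"

definition arc_centroid :: "(real \<Rightarrow> real \<Rightarrow> complex) \<Rightarrow> real \<Rightarrow> real \<Rightarrow> real \<Rightarrow> complex" where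
  "arc_centroid c p q t = inverse (arc_length c p q t) *\<^sub>R arc_moment c p q t"

lemma arc_length_const_speed:
  assumes "\<And>\<theta>. norm (dth c t \<theta>) = v" "p \<le> q"
  shows "arc_length c p q t = (q - p) * v"
  using assms by (simp add: arc_length_def)

lemma curvature_eq_dth:
  "curvature (c t) \<theta> = det2 (dth c t \<theta>) (dth (dth c) t \<theta>) / norm (dth c t \<theta>) ^ 3"
  by (simp add: curvature_def dth_def)

locale imm_path =
  fixes c :: "real \<Rightarrow> real \<Rightarrow> complex"
  assumes smooth_imm: "smooth_imm_path c"
begin

lemma continuous_on_iter_partial:
  "continuous_on ({0..1} \<times> UNIV) (\<lambda>z. iter_partial w c (fst z) (snd z))"
  using smooth_imm by (simp add: smooth_imm_path_def jointly_smooth_def case_prod_beta')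

lemma continuous_on_partials:
  "continuous_on ({0..1} \<times> UNIV) (\<lambda>z. c (fst z) (snd z))"
  "continuous_on ({0..1} \<times> UNIV) (\<lambda>z. dt c (fst z) (snd z))"
  "continuous_on ({0..1} \<times> UNIV) (\<lambda>z. dth c (fst z) (snd z))"
  "continuous_on ({0..1} \<times> UNIV) (\<lambda>z. dth (dth c) (fst z) (snd z))"
  "continuous_on ({0..1} \<times> UNIV) (\<lambda>z. dth (dt c) (fst z) (snd z))"
  using continuous_on_iter_partial[of "[]"] continuous_on_iter_partial[of "[True]"]
    continuous_on_iter_partial[of "[False]"] continuous_on_iter_partial[of "[False, False]"]
    continuous_on_iter_partial[of "[False, True]"]
  by simp_all

lemma has_dt_c:
  "t \<in> {0..1} \<Longrightarrow> ((\<lambda>s. c s \<theta>) has_vector_derivative dt c t \<theta>) (at t within {0..1})"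
  using smooth_imm unfolding smooth_imm_path_def jointly_smooth_def
  by (metis iter_partial.simps(1))

lemma has_dth_iter_partial:
  "t \<in> {0..1} \<Longrightarrow> (iter_partial w c t has_vector_derivative dth (iter_partial w c) t \<theta>) (at \<theta>)"
  using smooth_imm by (simp add: smooth_imm_path_def jointly_smooth_def)

lemma has_dth_partials:
  assumes "t \<in> {0..1}"
  shows "(c t has_vector_derivative dth c t \<theta>) (at \<theta>)"
    and "(dth c t has_vector_derivative dth (dth c) t \<theta>) (at \<theta>)"
    and "(dt c t has_vector_derivative dth (dt c) t \<theta>) (at \<theta>)"
  using has_dth_iter_partial[OF assms, of "[]"] has_dth_iter_partial[OF assms, of "[False]"]
    has_dth_iter_partial[OF assms, of "[True]"]
  by simp_all

lemma dth_nonzero: "t \<in> {0..1} \<Longrightarrow> dth c t \<theta> \<noteq> 0"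
  using smooth_imm by (simp add: smooth_imm_path_def)

lemma reduce_mod_2pi: "t \<in> {0..1} \<Longrightarrow> c t \<theta> = c t (2 * pi * frac (\<theta> / (2 * pi)))"
  using smooth_imm by (intro periodic_reduce_frac) (auto simp: smooth_imm_path_def)

text \<open>Differentiating \<open>c t = c 0 + \<integral>\<^sub>0\<^sup>t dt c\<close> in \<open>\<theta>\<close> under the integral sign: this is where
  the mixed partials \<open>dt (dth c)\<close> and \<open>dth (dt c)\<close> are identified.\<close>
lemma dth_eq_integral:
  assumes t: "t \<in> {0..1}"
  shows "dth c t \<theta> = dth c 0 \<theta> + integral {0..t} (\<lambda>s. dth (dt c) s \<theta>)"
proof -
  have ftc: "c t x = c 0 x + integral {0..t} (\<lambda>s. dt c s x)" for x
  proof -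
    have "((\<lambda>s. dt c s x) has_integral (c t x - c 0 x)) {0..t}"
      using t by (intro fundamental_theorem_of_calculus)
        (auto intro: has_vector_derivative_within_subset[OF has_dt_c])
    then show ?thesis by (simp add: integral_unique)
  qed
  have "((\<lambda>x. integral (cbox 0 t) (\<lambda>s. dt c s x)) has_vector_derivative
      integral (cbox 0 t) (\<lambda>s. dth (dt c) s \<theta>)) (at \<theta> within UNIV)"
  proof (rule leibniz_rule_vector_derivative)
    show "((\<lambda>x. dt c s x) has_vector_derivative dth (dt c) s x) (at x within UNIV)"
      if "s \<in> cbox 0 t" for x s
      using has_dth_partials(3)[of s x] that t by auto
    show "(\<lambda>s. dt c s x) integrable_on cbox 0 t" for x
      using t by (intro integrable_continuous continuous_on_fix_snd[OF continuous_on_partials(2)]) auto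
    show "continuous_on (UNIV \<times> cbox 0 t) (\<lambda>(x, s). dth (dt c) s x)"
      using t by (intro continuous_on_swap_restrict[OF continuous_on_partials(5)]) auto
  qed auto
  then have "((\<lambda>x. c 0 x + integral {0..t} (\<lambda>s. dt c s x)) has_vector_derivative
      dth c 0 \<theta> + integral {0..t} (\<lambda>s. dth (dt c) s \<theta>)) (at \<theta>)"
    using has_vector_derivative_add[OF has_dth_partials(1)[of 0 \<theta>]] by simp
  moreover have "(\<lambda>x. c 0 x + integral {0..t} (\<lambda>s. dt c s x)) = c t"
    using ftc by auto
  ultimately have "(c t has_vector_derivative dth c 0 \<theta> + integral {0..t} (\<lambda>s. dth (dt c) s \<theta>)) (at \<theta>)"
    by simp
  then show ?thesis using vector_derivative_unique_at[OF has_dth_partials(1)[OF t]] by blast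
qed

lemma dth_has_dt:
  assumes t: "t \<in> {0..1}"
  shows "((\<lambda>s. dth c s \<theta>) has_vector_derivative dth (dt c) t \<theta>) (at t within {0..1})"
proof -
  have integral_form: "((\<lambda>s. dth c 0 \<theta> + integral {0..s} (\<lambda>s. dth (dt c) s \<theta>))
      has_vector_derivative dth (dt c) t \<theta>) (at t within {0..1})"
    using has_vector_derivative_add[OF has_vector_derivative_const integral_has_vector_derivative
        [OF continuous_on_fix_snd[OF continuous_on_partials(5) order_refl] t]] by simp
  show ?thesis
    by (rule has_vector_derivative_transform[OF t _ integral_form]) (erule dth_eq_integral)
qed

lemma speed_has_dt:
  "t \<in> {0..1} \<Longrightarrow> ((\<lambda>s. norm (dth c s \<theta>)) has_real_derivative speed_dt c t \<theta>) (at t within {0..1})"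
  unfolding speed_dt_def has_real_derivative_iff_has_vector_derivative
  by (rule has_vector_derivative_norm[OF dth_has_dt dth_nonzero])

lemma continuous_on_speed_dt:
  "continuous_on ({0..1} \<times> UNIV) (\<lambda>z. speed_dt c (fst z) (snd z))"
  unfolding speed_dt_def
  by (intro continuous_intros continuous_on_partials) (auto simp: dth_nonzero)

lemma continuous_on_curvature:
  "continuous_on ({0..1} \<times> UNIV) (\<lambda>z. curvature (c (fst z)) (snd z))"
  unfolding curvature_eq_dth det2_def
  by (intro continuous_intros continuous_on_partials) (auto simp: dth_nonzero)

lemma continuous_on_slices:
  assumes "t \<in> {0..1}"
  shows "continuous_on S (c t)" "continuous_on S (dt c t)" "continuous_on S (dth c t)"
    "continuous_on S (curvature (c t))" "continuous_on S (speed_dt c t)"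
  using continuous_on_fix_fst[OF continuous_on_partials(1) assms]
    continuous_on_fix_fst[OF continuous_on_partials(2) assms]
    continuous_on_fix_fst[OF continuous_on_partials(3) assms]
    continuous_on_fix_fst[OF continuous_on_curvature assms]
    continuous_on_fix_fst[OF continuous_on_speed_dt assms]
  by simp_all

text \<open>Horizontality \<open>dt c \<perp> dth c\<close>, differentiated in \<open>\<theta>\<close>, turns \<open>dth c \<bullet> dth (dt c)\<close>
  into \<open>- dt c \<bullet> dth (dth c)\<close>, which only sees the curvature.\<close>
lemma abs_speed_dt:
  assumes t: "t \<in> {0..1}" and horizontal: "\<And>\<theta>. dt c t \<theta> \<bullet> dth c t \<theta> = 0"
  shows "\<bar>speed_dt c t \<theta>\<bar> = \<bar>curvature (c t) \<theta>\<bar> * norm (dt c t \<theta>) * norm (dth c t \<theta>)"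
proof -
  let ?T = "dth c t \<theta>" and ?V = "dt c t \<theta>" and ?W = "dth (dth c) t \<theta>" and ?Y = "dth (dt c) t \<theta>"
  have "((\<lambda>x. dt c t x \<bullet> dth c t x) has_vector_derivative ?V \<bullet> ?W + ?Y \<bullet> ?T) (at \<theta>)"
    by (rule has_vector_derivative_inner[OF has_dth_partials(3,2)[OF t]])
  moreover have "((\<lambda>x. dt c t x \<bullet> dth c t x) has_vector_derivative 0) (at \<theta>)"
    by (simp add: horizontal)
  ultimately have "?T \<bullet> ?Y = - (?V \<bullet> ?W)"
    using vector_derivative_unique_at by (fastforce simp: inner_commute)
  then have "\<bar>?T \<bullet> ?Y\<bar> = norm ?V * \<bar>det2 ?T ?W\<bar> / norm ?T"
    using abs_inner_orthogonal_eq_det2[OF horizontal dth_nonzero[OF t]] by simp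
  then show ?thesis
    using dth_nonzero[OF t] unfolding speed_dt_def curvature_eq_dth
    by (simp add: abs_divide power3_eq_cube field_simps)
qed

lemma integrable_norm_dth: "t \<in> {0..1} \<Longrightarrow> (\<lambda>\<theta>. norm (dth c t \<theta>)) integrable_on {a..b}"
  by (intro integrable_continuous_interval continuous_intros continuous_on_slices)

lemma arc_length_pos:
  assumes t: "t \<in> {0..1}" and "p < q"
  shows "arc_length c p q t > 0"
proof -
  have "continuous_on {p..q} (\<lambda>\<theta>. norm (dth c t \<theta>))"
    by (intro continuous_intros continuous_on_slices[OF t])
  then obtain x where x: "x \<in> {p..q}" and min: "\<And>y. y \<in> {p..q} \<Longrightarrow> norm (dth c t x) \<le> norm (dth c t y)"
    using continuous_attains_inf[of "{p..q}" "\<lambda>\<theta>. norm (dth c t \<theta>)"] \<open>p < q\<close> by auto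
  have "0 < (q - p) * norm (dth c t x)" using \<open>p < q\<close> dth_nonzero[OF t] by simp
  also have "\<dots> = integral {p..q} (\<lambda>_. norm (dth c t x))" using \<open>p < q\<close> by simp
  also have "\<dots> \<le> arc_length c p q t"
    unfolding arc_length_def by (rule integral_le) (use min integrable_norm_dth[OF t] in auto)
  finally show ?thesis .
qed

lemma norm_diff_le_arc_length:
  assumes t: "t \<in> {0..1}" and "x \<in> {p..q}" "y \<in> {p..q}"
  shows "norm (c t x - c t y) \<le> arc_length c p q t"
proof -
  have chord: "norm (c t y - c t x) \<le> arc_length c p q t" if "p \<le> x" "x \<le> y" "y \<le> q" for x y
  proof -
    have "((\<lambda>\<theta>. dth c t \<theta>) has_integral (c t y - c t x)) {x..y}"
      using that by (intro fundamental_theorem_of_calculus)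
        (auto intro: has_vector_derivative_at_within has_dth_partials(1)[OF t])
    then have "norm (c t y - c t x) = norm (integral {x..y} (\<lambda>\<theta>. dth c t \<theta>))"
      by (simp add: integral_unique)
    also have "\<dots> \<le> integral {x..y} (\<lambda>\<theta>. norm (dth c t \<theta>))"
      by (intro integral_norm_bound_integral integrable_continuous_interval
          continuous_on_slices[OF t] integrable_norm_dth[OF t]) auto
    also have "\<dots> \<le> arc_length c p q t"
      unfolding arc_length_def
      by (rule integral_subset_le) (use that in \<open>auto intro: integrable_norm_dth[OF t]\<close>)
    finally show ?thesis .
  qed
  show ?thesis
    using chord[of x y] chord[of y x] assms by (cases "x \<le> y") (auto simp: norm_minus_commute)
qed

lemma norm_diff_arc_centroid_le:
  assumes t: "t \<in> {0..1}" and "p < q" and \<theta>: "\<theta> \<in> {p..q}"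
  shows "norm (c t \<theta> - arc_centroid c p q t) \<le> arc_length c p q t"
proof -
  let ?L = "arc_length c p q t"
  have L: "?L > 0" by (rule arc_length_pos[OF t \<open>p < q\<close>])
  have "?L *\<^sub>R c t \<theta> - arc_moment c p q t
      = integral {p..q} (\<lambda>x. norm (dth c t x) *\<^sub>R (c t \<theta> - c t x))"
    unfolding arc_length_def arc_moment_def scaleR_diff_right
    by (subst integral_diff)
      (auto simp: integral_scaleR_const[OF integrable_norm_dth[OF t]]
        intro!: integrable_continuous_interval continuous_intros continuous_on_slices[OF t])
  also have "norm \<dots> \<le> integral {p..q} (\<lambda>x. norm (dth c t x) * ?L)"
    using norm_diff_le_arc_length[OF t \<theta>]
    by (intro integral_norm_bound_integral integrable_continuous_interval continuous_intros
        continuous_on_slices[OF t]) (auto intro: mult_left_mono)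
  also have "\<dots> = ?L * ?L" unfolding arc_length_def by simp
  finally have bound: "norm (?L *\<^sub>R c t \<theta> - arc_moment c p q t) \<le> ?L * ?L" .
  have "c t \<theta> - arc_centroid c p q t = inverse ?L *\<^sub>R (?L *\<^sub>R c t \<theta> - arc_moment c p q t)"
    using L by (simp add: arc_centroid_def scaleR_diff_right)
  then have "norm (c t \<theta> - arc_centroid c p q t) = norm (?L *\<^sub>R c t \<theta> - arc_moment c p q t) / ?L"
    using L by (simp add: divide_inverse_commute)
  also have "\<dots> \<le> ?L * ?L / ?L" using bound L by (intro divide_right_mono) auto
  also have "\<dots> = ?L" using L by simp
  finally show ?thesis .
qed

lemma arc_length_has_derivative:
  assumes t: "t \<in> {0..1}"
  shows "(arc_length c p q has_real_derivative integral {p..q} (speed_dt c t)) (at t within {0..1})"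
proof -
  have "((\<lambda>t. integral (cbox p q) (\<lambda>\<theta>. norm (dth c t \<theta>))) has_vector_derivative
      integral (cbox p q) (speed_dt c t)) (at t within {0..1})"
  proof (rule leibniz_rule_vector_derivative)
    show "((\<lambda>t. norm (dth c t \<theta>)) has_vector_derivative speed_dt c s \<theta>) (at s within {0..1})"
      if "s \<in> {0..1}" for s \<theta>
      using speed_has_dt[OF that] by (simp add: has_real_derivative_iff_has_vector_derivative)
    show "continuous_on ({0..1} \<times> cbox p q) (\<lambda>(t, \<theta>). speed_dt c t \<theta>)"
      unfolding case_prod_beta' by (rule continuous_on_subset[OF continuous_on_speed_dt]) auto
  qed (use t integrable_norm_dth in auto)
  then show ?thesis
    by (simp add: arc_length_def[abs_def] has_real_derivative_iff_has_vector_derivative)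
qed

lemma arc_moment_has_derivative:
  assumes t: "t \<in> {0..1}"
  shows "(arc_moment c p q has_vector_derivative
      integral {p..q} (\<lambda>\<theta>. norm (dth c t \<theta>) *\<^sub>R dt c t \<theta> + speed_dt c t \<theta> *\<^sub>R c t \<theta>))
    (at t within {0..1})"
proof -
  have "((\<lambda>t. integral (cbox p q) (\<lambda>\<theta>. norm (dth c t \<theta>) *\<^sub>R c t \<theta>)) has_vector_derivative
      integral (cbox p q) (\<lambda>\<theta>. norm (dth c t \<theta>) *\<^sub>R dt c t \<theta> + speed_dt c t \<theta> *\<^sub>R c t \<theta>))
    (at t within {0..1})"
  proof (rule leibniz_rule_vector_derivative)
    show "((\<lambda>t. norm (dth c t \<theta>) *\<^sub>R c t \<theta>) has_vector_derivative
        norm (dth c s \<theta>) *\<^sub>R dt c s \<theta> + speed_dt c s \<theta> *\<^sub>R c s \<theta>) (at s within {0..1})"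
      if "s \<in> {0..1}" for s \<theta>
      by (rule has_vector_derivative_scaleR[OF speed_has_dt[OF that] has_dt_c[OF that]])
    show "continuous_on ({0..1} \<times> cbox p q)
        (\<lambda>(t, \<theta>). norm (dth c t \<theta>) *\<^sub>R dt c t \<theta> + speed_dt c t \<theta> *\<^sub>R c t \<theta>)"
      unfolding case_prod_beta'
      by (intro continuous_intros continuous_on_subset[OF continuous_on_speed_dt]
          continuous_on_subset[OF continuous_on_partials(1)]
          continuous_on_subset[OF continuous_on_partials(2)]
          continuous_on_subset[OF continuous_on_partials(3)]) auto
  qed (use t in \<open>auto intro!: integrable_continuous_interval continuous_intros continuous_on_slices\<close>)
  then show ?thesis by (simp add: arc_moment_def[abs_def])
qed

text \<open>The quotient rule for \<open>m = M / L\<close>, with \<open>M' - L' m\<close> folded into a single integral.\<close>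
lemma arc_centroid_has_derivative:
  assumes t: "t \<in> {0..1}" and "p < q"
  shows "(arc_centroid c p q has_vector_derivative inverse (arc_length c p q t) *\<^sub>R
      integral {p..q} (\<lambda>\<theta>. norm (dth c t \<theta>) *\<^sub>R dt c t \<theta> + speed_dt c t \<theta> *\<^sub>R (c t \<theta> - arc_centroid c p q t)))
    (at t within {0..1})"
proof -
  let ?L = "arc_length c p q t" and ?L' = "integral {p..q} (speed_dt c t)"
  let ?M' = "integral {p..q} (\<lambda>\<theta>. norm (dth c t \<theta>) *\<^sub>R dt c t \<theta> + speed_dt c t \<theta> *\<^sub>R c t \<theta>)"
  let ?m = "arc_centroid c p q t"
  have L: "?L > 0" by (rule arc_length_pos[OF t \<open>p < q\<close>])
  have "(arc_centroid c p q has_vector_derivative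
      - (inverse ?L * ?L' * inverse ?L) *\<^sub>R arc_moment c p q t + inverse ?L *\<^sub>R ?M') (at t within {0..1})"
    unfolding arc_centroid_def[abs_def]
    using has_vector_derivative_scaleR[OF DERIV_inverse'[OF arc_length_has_derivative[OF t]]
        arc_moment_has_derivative[OF t]] L
    by (simp add: add.commute)
  moreover have "?M' - ?L' *\<^sub>R ?m = integral {p..q}
      (\<lambda>\<theta>. norm (dth c t \<theta>) *\<^sub>R dt c t \<theta> + speed_dt c t \<theta> *\<^sub>R (c t \<theta> - ?m))"
    unfolding scaleR_diff_right add_diff_eq
    by (subst integral_diff)
      (auto simp: integral_scaleR_const[OF integrable_continuous_interval[OF continuous_on_slices(5)[OF t]]]
        intro!: integrable_continuous_interval continuous_intros continuous_on_slices[OF t])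
  ultimately show ?thesis
    using L by (simp add: arc_centroid_def scaleR_diff_right algebra_simps)
qed

end

locale horizontal_energy_path = imm_path +
  fixes A \<epsilon> :: real
  assumes A_pos: "A > 0" and eps_pos: "\<epsilon> > 0"
    and horizontal: "\<And>t \<theta>. t \<in> {0..1} \<Longrightarrow> dt c t \<theta> \<bullet> dth c t \<theta> = 0"
    and energy: "\<And>t. t \<in> {0..1} \<Longrightarrow> integral {0..2*pi}
      (\<lambda>\<theta>. (1 + A * (curvature (c t) \<theta>)\<^sup>2) * (norm (dt c t \<theta>))\<^sup>2 * norm (dth c t \<theta>)) = \<epsilon>\<^sup>2"
begin

context
  fixes p q :: real
  assumes window: "0 \<le> p" "p < q" "q \<le> 2 * pi"
begin

lemma energy_window_le:
  assumes t: "t \<in> {0..1}"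
  shows "integral {p..q}
    (\<lambda>\<theta>. (1 + A * (curvature (c t) \<theta>)\<^sup>2) * (norm (dt c t \<theta>))\<^sup>2 * norm (dth c t \<theta>)) \<le> \<epsilon>\<^sup>2"
  unfolding energy[OF t, symmetric] using window A_pos
  by (intro integral_subset_le integrable_continuous_interval continuous_intros
      continuous_on_slices[OF t]) auto

lemma kinetic_window_le:
  assumes t: "t \<in> {0..1}"
  shows "integral {p..q} (\<lambda>\<theta>. (norm (dt c t \<theta>))\<^sup>2 * norm (dth c t \<theta>)) \<le> \<epsilon>\<^sup>2"
proof -
  have "integral {p..q} (\<lambda>\<theta>. (norm (dt c t \<theta>))\<^sup>2 * norm (dth c t \<theta>))
      \<le> integral {p..q} (\<lambda>\<theta>. (1 + A * (curvature (c t) \<theta>)\<^sup>2) * (norm (dt c t \<theta>))\<^sup>2 * norm (dth c t \<theta>))"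
    using A_pos by (intro integral_le integrable_continuous_interval continuous_intros
        continuous_on_slices[OF t]) (simp add: algebra_simps)
  then show ?thesis using energy_window_le[OF t] by linarith
qed

lemma bending_window_le:
  assumes t: "t \<in> {0..1}"
  shows "integral {p..q} (\<lambda>\<theta>. (curvature (c t) \<theta>)\<^sup>2 * (norm (dt c t \<theta>))\<^sup>2 * norm (dth c t \<theta>)) \<le> \<epsilon>\<^sup>2 / A"
proof -
  have "integral {p..q} (\<lambda>\<theta>. (curvature (c t) \<theta>)\<^sup>2 * (norm (dt c t \<theta>))\<^sup>2 * norm (dth c t \<theta>))
      \<le> integral {p..q} (\<lambda>\<theta>. (1 + A * (curvature (c t) \<theta>)\<^sup>2) * (norm (dt c t \<theta>))\<^sup>2 * norm (dth c t \<theta>) / A)"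
    using A_pos by (intro integral_le integrable_continuous_interval continuous_intros
        continuous_on_slices[OF t]) (auto simp: field_simps)
  also have "\<dots> \<le> \<epsilon>\<^sup>2 / A"
    using energy_window_le[OF t] A_pos by (simp add: divide_right_mono)
  finally show ?thesis .
qed

lemma integral_velocity_le:
  assumes t: "t \<in> {0..1}"
  shows "integral {p..q} (\<lambda>\<theta>. norm (dt c t \<theta>) * norm (dth c t \<theta>)) \<le> \<epsilon> * sqrt (arc_length c p q t)"
proof -
  have "integral {p..q} (\<lambda>\<theta>. norm (dt c t \<theta>) * norm (dth c t \<theta>)) \<le> sqrt (\<epsilon>\<^sup>2 * arc_length c p q t)"
    using kinetic_window_le[OF t] eps_pos arc_length_pos[OF t window(2)]
    by (intro integral_le_sqrt_of_square_le_mult[where f="\<lambda>\<theta>. (norm (dt c t \<theta>))\<^sup>2 * norm (dth c t \<theta>)"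
          and g="\<lambda>\<theta>. norm (dth c t \<theta>)"])
      (auto simp: arc_length_def power2_eq_square intro!: integrable_continuous_interval
        continuous_intros continuous_on_slices[OF t])
  then show ?thesis using eps_pos by (simp add: real_sqrt_mult)
qed

lemma integral_curvature_velocity_le:
  assumes t: "t \<in> {0..1}"
  shows "integral {p..q} (\<lambda>\<theta>. \<bar>curvature (c t) \<theta>\<bar> * norm (dt c t \<theta>) * norm (dth c t \<theta>))
    \<le> \<epsilon> / sqrt A * sqrt (arc_length c p q t)"
proof -
  have "integral {p..q} (\<lambda>\<theta>. \<bar>curvature (c t) \<theta>\<bar> * norm (dt c t \<theta>) * norm (dth c t \<theta>))
      \<le> sqrt (\<epsilon>\<^sup>2 / A * arc_length c p q t)"
  proof (rule integral_le_sqrt_of_square_le_mult[where g="\<lambda>\<theta>. norm (dth c t \<theta>)"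
        and f="\<lambda>\<theta>. (curvature (c t) \<theta>)\<^sup>2 * (norm (dt c t \<theta>))\<^sup>2 * norm (dth c t \<theta>)"])
    show "(\<bar>curvature (c t) \<theta>\<bar> * norm (dt c t \<theta>) * norm (dth c t \<theta>))\<^sup>2
        \<le> (curvature (c t) \<theta>)\<^sup>2 * (norm (dt c t \<theta>))\<^sup>2 * norm (dth c t \<theta>) * norm (dth c t \<theta>)" for \<theta>
      by (simp add: power_mult_distrib power2_eq_square mult_ac)
  qed (use bending_window_le[OF t] eps_pos A_pos arc_length_pos[OF t window(2)] in
      \<open>auto simp: arc_length_def intro!: integrable_continuous_interval continuous_intros
        continuous_on_slices[OF t]\<close>)
  then show ?thesis using eps_pos A_pos by (simp add: real_sqrt_mult real_sqrt_divide)
qed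

lemma abs_arc_length_dt_le:
  assumes t: "t \<in> {0..1}"
  shows "\<bar>integral {p..q} (speed_dt c t)\<bar> \<le> \<epsilon> / sqrt A * sqrt (arc_length c p q t)"
proof -
  have "norm (integral {p..q} (speed_dt c t))
      \<le> integral {p..q} (\<lambda>\<theta>. \<bar>curvature (c t) \<theta>\<bar> * norm (dt c t \<theta>) * norm (dth c t \<theta>))"
    using abs_speed_dt[OF t horizontal[OF t]]
    by (intro integral_norm_bound_integral integrable_continuous_interval continuous_intros
        continuous_on_slices[OF t]) auto
  then show ?thesis using integral_curvature_velocity_le[OF t] by simp
qed

lemma sqrt_arc_length_drift:
  assumes t: "t \<in> {0..1}"
  shows "\<bar>sqrt (arc_length c p q t) - sqrt (arc_length c p q 0)\<bar> \<le> \<epsilon> / (2 * sqrt A)"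
proof -
  let ?S = "\<lambda>t. sqrt (arc_length c p q t)"
  have "norm (?S t - ?S 0) \<le> \<epsilon> / (2 * sqrt A) * \<bar>t - 0\<bar>"
  proof (rule norm_diff_le_of_vector_derivative_bound)
    fix s :: real assume s: "s \<in> {0..1}"
    have L: "arc_length c p q s > 0" by (rule arc_length_pos[OF s window(2)])
    show "(?S has_vector_derivative inverse (?S s) / 2 * integral {p..q} (speed_dt c s)) (at s within {0..1})"
      using DERIV_chain2[OF DERIV_real_sqrt[OF L] arc_length_has_derivative[OF s]]
      by (simp add: has_real_derivative_iff_has_vector_derivative)
    have "\<bar>inverse (?S s) / 2 * integral {p..q} (speed_dt c s)\<bar>
        = inverse (?S s) / 2 * \<bar>integral {p..q} (speed_dt c s)\<bar>"
      using L by (simp add: abs_mult)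
    also have "\<dots> \<le> inverse (?S s) / 2 * (\<epsilon> / sqrt A * ?S s)"
      using abs_arc_length_dt_le[OF s] L by (intro mult_left_mono) auto
    also have "\<dots> = \<epsilon> / (2 * sqrt A)" using L by simp
    finally show "norm (inverse (?S s) / 2 * integral {p..q} (speed_dt c s)) \<le> \<epsilon> / (2 * sqrt A)"
      by simp
  qed (use t in auto)
  also have "\<dots> \<le> \<epsilon> / (2 * sqrt A)"
    using t eps_pos A_pos by (intro mult_right_le_one_le) auto
  finally show ?thesis by simp
qed

lemma norm_centroid_velocity_integrand_le:
  assumes t: "t \<in> {0..1}" and \<theta>: "\<theta> \<in> {p..q}"
  shows "norm (norm (dth c t \<theta>) *\<^sub>R dt c t \<theta> + speed_dt c t \<theta> *\<^sub>R (c t \<theta> - arc_centroid c p q t))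
    \<le> norm (dt c t \<theta>) * norm (dth c t \<theta>)
      + arc_length c p q t * (\<bar>curvature (c t) \<theta>\<bar> * norm (dt c t \<theta>) * norm (dth c t \<theta>))"
proof -
  let ?m = "arc_centroid c p q t"
  have "norm (norm (dth c t \<theta>) *\<^sub>R dt c t \<theta> + speed_dt c t \<theta> *\<^sub>R (c t \<theta> - ?m))
      \<le> norm (dt c t \<theta>) * norm (dth c t \<theta>) + \<bar>speed_dt c t \<theta>\<bar> * norm (c t \<theta> - ?m)"
    using norm_triangle_ineq[of "norm (dth c t \<theta>) *\<^sub>R dt c t \<theta>" "speed_dt c t \<theta> *\<^sub>R (c t \<theta> - ?m)"]
    by (simp add: mult.commute)
  also have "\<dots> \<le> norm (dt c t \<theta>) * norm (dth c t \<theta>) + \<bar>speed_dt c t \<theta>\<bar> * arc_length c p q t"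
    using norm_diff_arc_centroid_le[OF t window(2) \<theta>] by (simp add: mult_left_mono)
  finally show ?thesis
    by (simp add: abs_speed_dt[OF t horizontal[OF t]] mult.commute)
qed

lemma norm_arc_centroid_dt_le:
  assumes t: "t \<in> {0..1}"
  shows "norm (inverse (arc_length c p q t) *\<^sub>R integral {p..q} (\<lambda>\<theta>. norm (dth c t \<theta>) *\<^sub>R dt c t \<theta>
      + speed_dt c t \<theta> *\<^sub>R (c t \<theta> - arc_centroid c p q t)))
    \<le> \<epsilon> / sqrt A * sqrt (arc_length c p q t) + \<epsilon> / sqrt (arc_length c p q t)"
proof -
  let ?L = "arc_length c p q t" and ?m = "arc_centroid c p q t"
  let ?I = "integral {p..q} (\<lambda>\<theta>. norm (dth c t \<theta>) *\<^sub>R dt c t \<theta> + speed_dt c t \<theta> *\<^sub>R (c t \<theta> - ?m))"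
  have L: "?L > 0" by (rule arc_length_pos[OF t window(2)])
  have "norm ?I
      \<le> integral {p..q} (\<lambda>\<theta>. norm (dt c t \<theta>) * norm (dth c t \<theta>)
          + ?L * (\<bar>curvature (c t) \<theta>\<bar> * norm (dt c t \<theta>) * norm (dth c t \<theta>)))"
    by (intro integral_norm_bound_integral integrable_continuous_interval continuous_intros
        continuous_on_slices[OF t] norm_centroid_velocity_integrand_le[OF t])
  also have "\<dots> = integral {p..q} (\<lambda>\<theta>. norm (dt c t \<theta>) * norm (dth c t \<theta>))
      + ?L * integral {p..q} (\<lambda>\<theta>. \<bar>curvature (c t) \<theta>\<bar> * norm (dt c t \<theta>) * norm (dth c t \<theta>))"
    by (subst integral_add) (auto intro!: integrable_continuous_interval continuous_intros
        continuous_on_slices[OF t])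
  also have "\<dots> \<le> \<epsilon> * sqrt ?L + ?L * (\<epsilon> / sqrt A * sqrt ?L)"
    using integral_velocity_le[OF t] integral_curvature_velocity_le[OF t] L
    by (intro add_mono mult_left_mono) auto
  finally have bound: "norm ?I \<le> \<epsilon> * sqrt ?L + ?L * (\<epsilon> / sqrt A * sqrt ?L)" .
  have "norm (inverse ?L *\<^sub>R ?I) = norm ?I / ?L"
    using L by (simp add: divide_inverse_commute)
  also have "\<dots> \<le> (\<epsilon> * sqrt ?L + ?L * (\<epsilon> / sqrt A * sqrt ?L)) / ?L"
    using bound L by (intro divide_right_mono) auto
  also have "\<dots> = \<epsilon> / sqrt A * sqrt ?L + \<epsilon> / sqrt ?L"
    using L by (simp add: field_simps flip: real_sqrt_mult)
  finally show ?thesis .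
qed

context
  fixes x :: real
  assumes L0: "arc_length c p q 0 = x\<^sup>2" and gap: "\<epsilon> / (2 * sqrt A) < x"
begin

lemma sqrt_arc_length_between:
  assumes "t \<in> {0..1}"
  shows "x - \<epsilon> / (2 * sqrt A) \<le> sqrt (arc_length c p q t)"
    and "sqrt (arc_length c p q t) \<le> x + \<epsilon> / (2 * sqrt A)"
proof -
  have "0 < \<epsilon> / (2 * sqrt A)" using eps_pos A_pos by simp
  then have "sqrt (arc_length c p q 0) = x" using L0 gap by simp
  then show "x - \<epsilon> / (2 * sqrt A) \<le> sqrt (arc_length c p q t)"
    and "sqrt (arc_length c p q t) \<le> x + \<epsilon> / (2 * sqrt A)"
    using sqrt_arc_length_drift[OF assms] by linarith+
qed

lemma norm_arc_centroid_shift_le: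
  "norm (arc_centroid c p q 1 - arc_centroid c p q 0)
    \<le> \<epsilon> / sqrt A * (x + \<epsilon> / (2 * sqrt A)) + \<epsilon> / (x - \<epsilon> / (2 * sqrt A))"
proof -
  let ?h = "\<epsilon> / (2 * sqrt A)" and ?m = "arc_centroid c p q"
  have "norm (?m 1 - ?m 0) \<le> (\<epsilon> / sqrt A * (x + ?h) + \<epsilon> / (x - ?h)) * \<bar>1 - 0\<bar>"
  proof (rule norm_diff_le_of_vector_derivative_bound)
    fix t :: real assume t: "t \<in> {0..1}"
    let ?S = "sqrt (arc_length c p q t)"
    show "(?m has_vector_derivative inverse (arc_length c p q t) *\<^sub>R integral {p..q}
        (\<lambda>\<theta>. norm (dth c t \<theta>) *\<^sub>R dt c t \<theta> + speed_dt c t \<theta> *\<^sub>R (c t \<theta> - ?m t))) (at t within {0..1})"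
      by (rule arc_centroid_has_derivative[OF t window(2)])
    have "\<epsilon> / sqrt A * ?S \<le> \<epsilon> / sqrt A * (x + ?h)"
      using sqrt_arc_length_between(2)[OF t] eps_pos A_pos by (intro mult_left_mono) auto
    moreover have "\<epsilon> / ?S \<le> \<epsilon> / (x - ?h)"
    proof (rule divide_left_mono)
      show "0 < ?S * (x - ?h)"
        using arc_length_pos[OF t window(2)] gap by (intro mult_pos_pos) auto
    qed (use sqrt_arc_length_between(1)[OF t] eps_pos in auto)
    ultimately show "norm (inverse (arc_length c p q t) *\<^sub>R integral {p..q}
        (\<lambda>\<theta>. norm (dth c t \<theta>) *\<^sub>R dt c t \<theta> + speed_dt c t \<theta> *\<^sub>R (c t \<theta> - ?m t)))
        \<le> \<epsilon> / sqrt A * (x + ?h) + \<epsilon> / (x - ?h)"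
      using norm_arc_centroid_dt_le[OF t] by linarith
  qed auto
  then show ?thesis by simp
qed

lemma displacement_le:
  assumes \<theta>: "\<theta> \<in> {p..q}"
  shows "norm (c 0 \<theta> - c 1 \<theta>) \<le> x\<^sup>2 + (x + \<epsilon> / (2 * sqrt A))\<^sup>2
    + (\<epsilon> / sqrt A * (x + \<epsilon> / (2 * sqrt A)) + \<epsilon> / (x - \<epsilon> / (2 * sqrt A)))"
proof -
  let ?m = "arc_centroid c p q"
  have "arc_length c p q 1 \<le> (x + \<epsilon> / (2 * sqrt A))\<^sup>2"
  proof -
    have L1: "0 < arc_length c p q 1" by (rule arc_length_pos[OF _ window(2)]) simp
    then have "arc_length c p q 1 = (sqrt (arc_length c p q 1))\<^sup>2" by simp
    also have "\<dots> \<le> (x + \<epsilon> / (2 * sqrt A))\<^sup>2"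
      using sqrt_arc_length_between(2)[of 1] L1 by (intro power_mono) auto
    finally show ?thesis .
  qed
  moreover have "norm (c 0 \<theta> - ?m 0) \<le> x\<^sup>2" "norm (c 1 \<theta> - ?m 1) \<le> arc_length c p q 1"
    using norm_diff_arc_centroid_le[OF _ window(2) \<theta>, of 0] norm_diff_arc_centroid_le[OF _ window(2) \<theta>, of 1] L0
    by auto
  moreover have "norm (c 0 \<theta> - c 1 \<theta>) \<le> norm (c 0 \<theta> - ?m 0) + norm (?m 1 - ?m 0) + norm (c 1 \<theta> - ?m 1)"
    using norm_triangle_ineq4[of "c 0 \<theta> - ?m 0" "?m 1 - ?m 0"]
      norm_triangle_ineq4[of "c 0 \<theta> - ?m 0 - (?m 1 - ?m 0)" "c 1 \<theta> - ?m 1"]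
    by (simp add: algebra_simps)
  ultimately show ?thesis using norm_arc_centroid_shift_le by linarith
qed

end

end

lemma displacement_le_const_speed:
  assumes speed: "\<And>\<theta>. norm (dth c 0 \<theta>) = l / (2 * pi)" and "l > 0"
    and gap: "\<epsilon> / (2 * sqrt A) < x" and fits: "x\<^sup>2 \<le> l / 2" and \<theta>: "\<theta> \<in> {0..2 * pi}"
  shows "norm (c 0 \<theta> - c 1 \<theta>) \<le> x\<^sup>2 + (x + \<epsilon> / (2 * sqrt A))\<^sup>2
    + (\<epsilon> / sqrt A * (x + \<epsilon> / (2 * sqrt A)) + \<epsilon> / (x - \<epsilon> / (2 * sqrt A)))"
proof -
  have "0 < \<epsilon> / (2 * sqrt A)" using A_pos eps_pos by simp
  then have length: "0 < x\<^sup>2 / (l / (2 * pi))" "2 * (x\<^sup>2 / (l / (2 * pi))) \<le> 2 * pi - 0"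
    using gap fits \<open>l > 0\<close> by (auto simp: field_simps)
  have "0 \<le> \<theta>" "\<theta> \<le> 2 * pi" using \<theta> by auto
  then obtain p q where window: "0 \<le> p" "p < q" "q \<le> 2 * pi" "\<theta> \<in> {p..q}"
    and "q - p = x\<^sup>2 / (l / (2 * pi))"
    using length by (rule interval_of_length_containing)
  then have "arc_length c p q 0 = x\<^sup>2"
    using arc_length_const_speed[OF speed] \<open>l > 0\<close> by simp
  then show ?thesis by (rule displacement_le[OF window(1-3) _ gap window(4)])
qed

end

lemma fourth_root_smallness:
  fixes P Q R :: real
  assumes P: "P > 0" and Q: "Q > 0" and R: "R > 0"
    and small1: "Q^4 < R^2 * P^4 / 4" and small2: "Q^4 < P^12 / 8"
  shows "Q^2 < R * P^2 / 2" and "Q < P^3" and "Q^2 < P^6 / 2"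
proof -
  show "Q^2 < R * P^2 / 2"
  proof (rule power_less_imp_less_base[of _ 2])
    show "(Q^2)^2 < (R * P^2 / 2)^2"
      using small1 by (simp add: power_mult_distrib power_divide flip: power_mult)
  qed (use R in simp)
  show "Q < P^3"
  proof (rule power_less_imp_less_base[of _ 4])
    have "(P^3)^4 = P^12" by (simp flip: power_mult)
    then show "Q^4 < (P^3)^4" using small2 zero_less_power[OF Q, of 4] by linarith
  qed (use P in simp)
  show "Q^2 < P^6 / 2"
  proof (rule power_less_imp_less_base[of _ 2])
    have "(Q^2)^2 = Q^4" "(P^6 / 2)^2 = P^12 / 4" by (simp_all add: power_divide flip: power_mult)
    then show "(Q^2)^2 < (P^6 / 2)^2" using small2 zero_less_power[OF Q, of 4] by linarith
  qed (use P in simp)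
qed

lemma eta_cross_terms_le:
  fixes P Q R a b :: real
  assumes P: "P > 0" and Q: "Q > 0" and R: "R > 0"
    and small1: "Q^4 < R^2 * P^4 / 4" and small2: "Q^4 < P^12 / 8"
    and a: "a = P * Q / 2" and b: "b = Q^4 / R^2"
  shows "a * b \<le> P^6 / R * Q^2 / 4" and "b\<^sup>2 \<le> P^6 / R * Q^2 / 8"
proof -
  note Q2 = fourth_root_smallness(1)[OF P Q R small1 small2]
  have "Q^3 = Q^2 * Q" by (simp add: power_numeral_reduce)
  also have "\<dots> \<le> (R * P^2 / 2) * P^3"
    using Q2 fourth_root_smallness(2)[OF P Q R small1 small2] Q R by (intro mult_mono) auto
  also have "\<dots> = P^5 * R / 2" by (simp add: power_numeral_reduce)
  finally have "2 * Q^3 \<le> P^5 * R" by simp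
  have "P^6 / R * Q^2 / 4 - a * b = P * Q^2 * (P^5 * R - 2 * Q^3) / (4 * R^2)"
    unfolding a b using R by (simp add: field_simps power_numeral_reduce)
  also have "\<dots> \<ge> 0" using \<open>2 * Q^3 \<le> P^5 * R\<close> P R by simp
  finally show "a * b \<le> P^6 / R * Q^2 / 4" by simp
  have "(Q^2)^3 \<le> (R * P^2 / 2)^3" using Q2 Q by (intro power_mono) auto
  then have "8 * Q^6 \<le> P^6 * R^3"
    by (simp add: power_mult_distrib power_divide mult.commute flip: power_mult)
  have "P^6 / R * Q^2 / 8 - b\<^sup>2 = Q^2 * (P^6 * R^3 - 8 * Q^6) / (8 * R^4)"
    unfolding b using R by (simp add: field_simps power_numeral_reduce)
  also have "\<dots> \<ge> 0" using \<open>8 * Q^6 \<le> P^6 * R^3\<close> Q R by simp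
  finally show "b\<^sup>2 \<le> P^6 / R * Q^2 / 8" by simp
qed

lemma eta_polynomial_bound:
  fixes P Q R a b :: real
  assumes P: "P > 0" and Q: "Q > 0" and R: "R > 0"
    and small1: "Q^4 < R^2 * P^4 / 4" and small2: "Q^4 < P^12 / 8"
    and a: "a = P * Q / 2" and b: "b = Q^4 / R^2"
  shows "(a + b)\<^sup>2 + (a + b + b / 2)\<^sup>2 + (b * (a + b + b / 2) + Q^4 / (a + b - b / 2))
      \<le> 4 * (P^6 / R * Q^2 + P^2 * Q^2)"
proof -
  have "a > 0" "b > 0" using P Q R unfolding a b by simp_all
  then have "Q^4 / (a + b - b / 2) \<le> Q^4 / a" by (intro divide_left_mono mult_pos_pos) auto
  also have "\<dots> = 2 * Q^3 / P" using P Q unfolding a by (simp add: field_simps power_numeral_reduce)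
  also have "\<dots> \<le> 2 * (P^2 * Q^2)"
  proof -
    have "Q^3 \<le> P^3 * Q^2"
      using mult_right_mono[OF less_imp_le[OF fourth_root_smallness(2)[OF P Q R small1 small2]], of "Q^2"]
      by (simp add: power_numeral_reduce)
    then show ?thesis using P by (simp add: divide_le_eq power_numeral_reduce algebra_simps)
  qed
  finally have bound: "Q^4 / (a + b - b / 2) \<le> 2 * (P^2 * Q^2)" .
  have aa: "a\<^sup>2 = P^2 * Q^2 / 4" unfolding a by (simp add: power_mult_distrib power_divide)
  have expand: "(a + b)\<^sup>2 + (a + b + b / 2)\<^sup>2 + (b * (a + b + b / 2) + E)
      = 2 * a\<^sup>2 + 6 * (a * b) + 19 / 4 * b\<^sup>2 + E" for E
    by (simp add: power2_eq_square algebra_simps)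
  have combine: "2 * X + 6 * Y + 19 / 4 * Z + E \<le> 4 * (V + U)"
    if "X = U / 4" "Y \<le> V / 4" "Z \<le> V / 8" "E \<le> 2 * U" "0 \<le> U" "0 \<le> V" for X Y Z E U V :: real
    using that by (simp add: field_simps)
  show ?thesis
    unfolding expand using P R
    by (intro combine[OF aa eta_cross_terms_le[OF P Q R small1 small2 a b] bound]) simp_all
qed

lemma eta_window_bound:
  fixes P Q R a b :: real
  assumes P: "P > 0" and Q: "Q > 0" and R: "R > 0"
    and small1: "Q^4 < R^2 * P^4 / 4" and small2: "Q^4 < P^12 / 8"
    and a: "a = P * Q / 2" and b: "b = Q^4 / R^2"
  shows "(a + b)\<^sup>2 \<le> P^8 / 2"
proof -
  have "b < P^4 / 4" unfolding b using small1 R by (simp add: divide_less_eq mult.commute)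
  then have "b\<^sup>2 \<le> (P^4 / 4)\<^sup>2" using Q R unfolding b by (intro power_mono) auto
  also have "\<dots> = P^8 / 16" by (simp add: power_divide flip: power_mult)
  finally have "b\<^sup>2 \<le> P^8 / 16" .
  moreover have "a\<^sup>2 \<le> P^8 / 8"
  proof -
    have "P^2 * Q^2 \<le> P^2 * (P^6 / 2)"
      using fourth_root_smallness(3)[OF P Q R small1 small2] by (intro mult_left_mono) auto
    then show ?thesis unfolding a by (simp add: power_mult_distrib power_divide flip: power_add)
  qed
  moreover have "(a + b)\<^sup>2 \<le> 2 * a\<^sup>2 + 2 * b\<^sup>2"
    using zero_le_power2[of "a - b"] by (simp add: power2_eq_square algebra_simps)
  ultimately show ?thesis using zero_le_power[of P 8] P by linarith
qed

text \<open>In the fourth roots \<open>P = l\<^bsup>1/8\<^esup>\<close>, \<open>Q = \<epsilon>\<^bsup>1/4\<^esup>\<close>, \<open>R = A\<^bsup>1/4\<^esup>\<close> every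
  quantity below is a polynomial or rational expression.\<close>
lemma eta_estimate:
  fixes A \<epsilon> l x :: real
  assumes A: "A > 0" and \<epsilon>: "\<epsilon> > 0" and l: "l > 0"
    and small: "\<epsilon> < min (2 * sqrt (A * l)) (l powr (3/2)) / 8"
    and x: "x = l powr (1/8) * \<epsilon> powr (1/4) / 2 + \<epsilon> / sqrt A"
  shows "\<epsilon> / (2 * sqrt A) < x" and "x\<^sup>2 \<le> l / 2"
    and "x\<^sup>2 + (x + \<epsilon> / (2 * sqrt A))\<^sup>2
      + (\<epsilon> / sqrt A * (x + \<epsilon> / (2 * sqrt A)) + \<epsilon> / (x - \<epsilon> / (2 * sqrt A)))
      \<le> 4 * (l powr (3/4) * A powr (-1/4) + l powr (1/4)) * sqrt \<epsilon>"
proof -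
  define P Q R where "P = l powr (1/8)" and "Q = \<epsilon> powr (1/4)" and "R = A powr (1/4)"
  have pos: "P > 0" "Q > 0" "R > 0" using A \<epsilon> l by (simp_all add: P_def Q_def R_def)
  have l_eq: "l = (P^4)\<^sup>2" and \<epsilon>_eq: "\<epsilon> = (Q^2)\<^sup>2" and A_eq: "A = (R^2)\<^sup>2"
    using A \<epsilon> l by (simp_all add: P_def Q_def R_def powr_power flip: power_mult)
  have sqrt_eq: "sqrt l = P^4" "sqrt \<epsilon> = Q^2" "sqrt A = R^2"
    by (rule real_sqrt_unique, simp only: l_eq \<epsilon>_eq A_eq, simp)+
  have powr_eq: "l powr (3/4) = P^6" "l powr (1/4) = P^2" "l powr (3/2) = P^12"
    using powr_power[of l "1/8" 6] powr_power[of l "1/8" 2] powr_power[of l "1/8" 12] l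
    by (simp_all add: P_def)
  have "A powr (-1/4) = 1 / R"
    using powr_minus_divide[of A "1/4"] unfolding R_def by (simp only: minus_divide_left)
  then have rhs: "4 * (l powr (3/4) * A powr (-1/4) + l powr (1/4)) * sqrt \<epsilon>
      = 4 * (P^6 / R * Q^2 + P^2 * Q^2)"
    unfolding powr_eq sqrt_eq by (simp add: algebra_simps)
  have "\<epsilon> = Q^4" using \<epsilon>_eq by (simp flip: power_mult)
  then have b: "\<epsilon> / sqrt A = Q^4 / R^2" and h: "\<epsilon> / (2 * sqrt A) = Q^4 / R^2 / 2"
    unfolding sqrt_eq by simp_all
  have x_eq: "x = P * Q / 2 + Q^4 / R^2" unfolding x b by (simp add: P_def Q_def)
  have small1: "Q^4 < R^2 * P^4 / 4" and small2: "Q^4 < P^12 / 8"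
    using small unfolding real_sqrt_mult sqrt_eq powr_eq \<open>\<epsilon> = Q^4\<close> by auto
  note poly = eta_polynomial_bound[OF pos small1 small2 refl refl]
    eta_window_bound[OF pos small1 small2 refl refl]
  have half_lt: "v / 2 < u + v" if "0 < u" "0 < v" for u v :: real using that by linarith
  show "\<epsilon> / (2 * sqrt A) < x" unfolding x_eq h using pos by (intro half_lt) simp_all
  show "x\<^sup>2 \<le> l / 2" using poly(2) unfolding x_eq l_eq by (simp flip: power_mult)
  show "x\<^sup>2 + (x + \<epsilon> / (2 * sqrt A))\<^sup>2
      + (\<epsilon> / sqrt A * (x + \<epsilon> / (2 * sqrt A)) + \<epsilon> / (x - \<epsilon> / (2 * sqrt A)))
      \<le> 4 * (l powr (3/4) * A powr (-1/4) + l powr (1/4)) * sqrt \<epsilon>"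
    using poly(1) unfolding rhs h b x_eq by (simp only: \<open>\<epsilon> = Q^4\<close>)
qed

theorem proposition3p5:
  fixes c :: "real \<Rightarrow> real \<Rightarrow> complex" and A \<epsilon> :: real
  assumes A_pos: "A > 0"
    and path: "smooth_imm_path c"
    and const_speed: "\<forall>\<theta>. norm (dth c 0 \<theta>) = curve_length (c 0) / (2*pi)"
    and eps_pos: "0 < \<epsilon>"
    and eps_small: "\<epsilon> < min (2 * sqrt (A * curve_length (c 0))) (curve_length (c 0) powr (3/2)) / 8"
    and horizontal: "\<forall>t\<in>{0..1}. \<forall>\<theta>. dt c t \<theta> \<bullet> dth c t \<theta> = 0"
    and energy: "\<forall>t\<in>{0..1}. integral {0..2*pi}
        (\<lambda>\<theta>. (1 + A * (curvature (c t) \<theta>)\<^sup>2) * (norm (dt c t \<theta>))\<^sup>2 * norm (dth c t \<theta>)) = \<epsilon>\<^sup>2"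
  shows "\<forall>\<theta>. norm (c 0 \<theta> - c 1 \<theta>)
    \<le> 4 * (curve_length (c 0) powr (3/4) * A powr (-1/4) + curve_length (c 0) powr (1/4)) * sqrt \<epsilon>"
proof
  fix \<theta>
  interpret horizontal_energy_path c A \<epsilon>
    using A_pos path eps_pos horizontal energy by unfold_locales auto
  define l where "l = curve_length (c 0)"
  define x where "x = l powr (1/8) * \<epsilon> powr (1/4) / 2 + \<epsilon> / sqrt A"
  have speed: "norm (dth c 0 \<theta>') = l / (2 * pi)" for \<theta>' using const_speed by (simp add: l_def)
  have "dth c 0 0 \<noteq> 0" by (rule dth_nonzero) simp
  then have "0 < l / (2 * pi)" using speed[of 0] by (metis zero_less_norm_iff)
  then have "l > 0" by (simp add: zero_less_divide_iff)
  note est = eta_estimate[OF A_pos eps_pos \<open>l > 0\<close> eps_small[folded l_def] x_def]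
  have "2 * pi * frac (\<theta> / (2 * pi)) \<in> {0..2 * pi}"
    using frac_lt_1[of "\<theta> / (2 * pi)"] by auto
  from displacement_le_const_speed[OF speed \<open>l > 0\<close> est(1,2) this] est(3)
  have "norm (c 0 (2 * pi * frac (\<theta> / (2 * pi))) - c 1 (2 * pi * frac (\<theta> / (2 * pi))))
      \<le> 4 * (l powr (3/4) * A powr (-1/4) + l powr (1/4)) * sqrt \<epsilon>"
    by linarith
  then show "norm (c 0 \<theta> - c 1 \<theta>)
      \<le> 4 * (curve_length (c 0) powr (3/4) * A powr (-1/4) + curve_length (c 0) powr (1/4)) * sqrt \<epsilon>"
    using reduce_mod_2pi[of 0 \<theta>] reduce_mod_2pi[of 1 \<theta>] by (simp add: l_def)
qed

end
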